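(* Let $\varphi(z)=\sum_{n=0}^{\infty}a_nz^n$ be of the form $\varphi(z)=\exp(az^2)P(z)$, where $a<0$ and $P$ is a hyperbolic polynomial (a real polynomial all of whose zeros are real). Then $0<\limsup_{n\to\infty} n|a_n|^{2/n}<\infty$, and there exists $n_0\in\mathbb{N}$ such that $a_{n-1}a_{n+1}\le 0$ for every $n>n_0$. *)

theory Defs
  imports "HOL-Analysis.Analysis" "HOL-Computational_Algebra.Polynomial"
begin

text \<open>A real polynomial is hyperbolic if all of its complex zeros are real.
  (The zero polynomial vanishes everywhere, hence is not hyperbolic.)\<close>
definition hyperbolic_poly :: "real poly \<Rightarrow> bool" where
  "hyperbolic_poly P \<longleftrightarrow> (\<forall>z::complex. poly (map_poly complex_of_real P) z = 0 \<longrightarrow> z \<in> \<real>)"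

end

theory Submission
  imports Defs
begin

text \<open>Expanding \<open>exp (a z\<^sup>2) = \<Sum>\<^sub>k a\<^sup>k z\<^sup>2\<^sup>k / k!\<close> and multiplying by \<open>P\<close>, every coefficient
  \<open>c\<^sub>n\<close> is a finite combination of the numbers \<open>a\<^sup>k / k!\<close>. Within a fixed parity class,
  the coefficient \<open>p\<^sub>J\<close> of \<open>P\<close> of largest index \<open>J\<close> in that class dominates:
  \<open>c\<^sub>J\<^sub>+\<^sub>2\<^sub>m \<sim> p\<^sub>J a\<^sup>m / m!\<close>, because the other contributions carry an extra factor
  \<open>m! / (m+k)! \<rightarrow> 0\<close>. Since \<open>a < 0\<close>, consecutive coefficients of a class eventually have
  opposite signs, and the elementary bounds \<open>m log m - m \<le> log m! \<le> m log m\<close> show that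
  \<open>n \<bar>c\<^sub>n\<bar>\<^bsup>2/n\<^esup>\<close> stays between two positive constants along the class. Hyperbolicity is
  only needed to exclude \<open>P = 0\<close>.\<close>

definition gauss_coeff :: "real \<Rightarrow> nat \<Rightarrow> real" where
  "gauss_coeff a k = (if even k then a ^ (k div 2) / fact (k div 2) else 0)"

lemma gauss_coeff_sums:
  "(\<lambda>n. complex_of_real (gauss_coeff a n) * z ^ n) sums exp (complex_of_real a * z\<^sup>2)"
proof -
  have "strict_mono (\<lambda>k::nat. 2 * k)" by (auto simp: strict_mono_def)
  then have "(\<lambda>n. complex_of_real (gauss_coeff a n) * z ^ n) sums exp (complex_of_real a * z\<^sup>2)
      \<longleftrightarrow> (\<lambda>k. complex_of_real (gauss_coeff a (2 * k)) * z ^ (2 * k)) sums exp (complex_of_real a * z\<^sup>2)"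
    by (rule sums_mono_reindex[symmetric]) (auto simp: gauss_coeff_def elim!: evenE)
  moreover have "complex_of_real (gauss_coeff a (2 * k)) * z ^ (2 * k) = (complex_of_real a * z\<^sup>2) ^ k /\<^sub>R fact k" for k
    by (simp add: gauss_coeff_def scaleR_conv_of_real power_mult_distrib field_simps
        flip: power_mult[of z 2 k])
  ultimately show ?thesis using exp_converges[of "complex_of_real a * z\<^sup>2"] by simp
qed

lemma gauss_coeff_shift_sums:
  "(\<lambda>n. complex_of_real (if j \<le> n then gauss_coeff a (n - j) else 0) * z ^ n)
     sums (z ^ j * exp (complex_of_real a * z\<^sup>2))"
proof -
  have "(\<lambda>i. z ^ j * (complex_of_real (gauss_coeff a i) * z ^ i)) sums (z ^ j * exp (complex_of_real a * z\<^sup>2))"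
    by (rule sums_mult[OF gauss_coeff_sums])
  then show ?thesis
    by (subst sums_zero_iff_shift[of j, symmetric]) (auto simp: power_add mult_ac)
qed

lemma gauss_coeff_diff_parity:
  assumes "j mod 2 \<noteq> n mod 2"
  shows "(if j \<le> n then gauss_coeff a (n - j) else 0) = 0"
proof -
  have "j \<le> n \<Longrightarrow> odd (n - j)" using assms by presburger
  then show ?thesis by (simp add: gauss_coeff_def)
qed

definition gauss_poly_coeff :: "real \<Rightarrow> real poly \<Rightarrow> nat \<Rightarrow> real" where
  "gauss_poly_coeff a P n = (\<Sum>j\<le>degree P. coeff P j * (if j \<le> n then gauss_coeff a (n - j) else 0))"

lemma gauss_poly_coeff_sums:
  "(\<lambda>n. complex_of_real (gauss_poly_coeff a P n) * z ^ n)
     sums (exp (complex_of_real a * z\<^sup>2) * poly (map_poly complex_of_real P) z)"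
proof -
  have "(\<lambda>n. \<Sum>j\<le>degree P. complex_of_real (coeff P j)
          * (complex_of_real (if j \<le> n then gauss_coeff a (n - j) else 0) * z ^ n))
      sums (\<Sum>j\<le>degree P. complex_of_real (coeff P j) * (z ^ j * exp (complex_of_real a * z\<^sup>2)))"
    by (intro sums_sum sums_mult gauss_coeff_shift_sums)
  then show ?thesis
    by (simp add: poly_altdef degree_map_poly coeff_map_poly gauss_poly_coeff_def
        sum_distrib_left sum_distrib_right mult_ac)
qed

lemma powser_eq_0_imp_coeff_eq_0:
  fixes b :: "nat \<Rightarrow> complex"
  assumes "\<And>z. (\<lambda>n. b n * z ^ n) sums 0"
  shows "b n = 0"
proof (induction n rule: less_induct)
  case (less n)
  have "(\<lambda>i. b (i + n) * z ^ i) sums 0" if "z \<noteq> 0" for z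
  proof -
    have "(\<lambda>i. b (i + n) * z ^ (i + n)) sums 0"
      using assms[of z] by (subst sums_zero_iff_shift) (auto simp: less)
    from sums_divide[OF this, of "z ^ n"] show ?thesis
      using that by (simp add: power_add field_simps)
  qed
  then have "((\<lambda>_. 0) \<longlongrightarrow> b (0 + n)) (at (0::complex))"
    by (intro powser_limit_0_strong[of 1]) auto
  then show ?case using LIM_const_eq by fastforce
qed

lemma eq_gauss_poly_coeff:
  assumes "\<And>z::complex. (\<lambda>n. complex_of_real (c n) * z ^ n) sums
             (exp (complex_of_real a * z\<^sup>2) * poly (map_poly complex_of_real P) z)"
  shows "c = gauss_poly_coeff a P"
proof
  fix n
  have "(\<lambda>n. complex_of_real (c n - gauss_poly_coeff a P n) * z ^ n) sums 0" for z
    using sums_diff[OF assms[of z] gauss_poly_coeff_sums[of a P z]] by (simp add: algebra_simps)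
  from powser_eq_0_imp_coeff_eq_0[OF this, of n] show "c n = gauss_poly_coeff a P n" by simp
qed

lemma fact_div_fact_add_tendsto_0:
  assumes "1 \<le> k"
  shows "(\<lambda>m. fact m / fact (m + k) :: real) \<longlonglongrightarrow> 0"
proof (rule real_tendsto_sandwich[OF _ _ tendsto_const LIMSEQ_inverse_real_of_nat])
  show "\<forall>\<^sub>F m in sequentially. 0 \<le> fact m / (fact (m + k) :: real)"
    by simp
  show "\<forall>\<^sub>F m in sequentially. fact m / fact (m + k) \<le> inverse (real (Suc m))"
  proof (intro always_eventually allI)
    fix m
    have "fact (Suc m) \<le> (fact (m + k) :: real)" using assms by (intro fact_mono) auto
    then show "fact m / fact (m + k) \<le> inverse (real (Suc m))" by (simp add: field_simps)
  qed
qed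

lemma top_coeff_of_parity:
  fixes P :: "'a::zero poly"
  assumes "coeff P j \<noteq> 0"
  obtains J where "J mod 2 = j mod 2" and "coeff P J \<noteq> 0"
    and "\<And>i. coeff P i \<noteq> 0 \<Longrightarrow> i mod 2 = J mod 2 \<Longrightarrow> i \<le> J"
proof -
  define S where "S = {i. coeff P i \<noteq> 0 \<and> i mod 2 = j mod 2}"
  have "finite S" by (rule finite_subset[of _ "{..degree P}"]) (auto simp: S_def le_degree)
  moreover have "j \<in> S" using assms by (simp add: S_def)
  ultimately have "Max S \<in> S" and "\<And>i. i \<in> S \<Longrightarrow> i \<le> Max S"
    using Max_in by auto
  then show thesis by (intro that[of "Max S"]) (auto simp: S_def)
qed

lemma gauss_poly_coeff_parity_class_tendsto:
  assumes "a \<noteq> 0" and "coeff P J \<noteq> 0"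
    and top: "\<And>j. coeff P j \<noteq> 0 \<Longrightarrow> j mod 2 = J mod 2 \<Longrightarrow> j \<le> J"
  shows "(\<lambda>m. gauss_poly_coeff a P (J + 2*m) * fact m / a ^ m) \<longlonglongrightarrow> coeff P J"
proof -
  define g where "g j m = coeff P j * (if j \<le> J + 2*m then gauss_coeff a (J + 2*m - j) else 0)
    * fact m / a ^ m" for j m
  have "g j \<longlonglongrightarrow> (if j = J then coeff P J else 0)" for j
  proof -
    consider "j = J" | "coeff P j = 0 \<or> j mod 2 \<noteq> J mod 2"
      | k where "1 \<le> k" "J = j + 2*k"
    proof (cases "j = J \<or> coeff P j = 0 \<or> j mod 2 \<noteq> J mod 2")
      case False
      then have "j < J" "even (J - j)" using top[of j] by auto
      then show ?thesis using that(3)[of "(J - j) div 2"] by auto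
    qed auto
    then show ?thesis
    proof cases
      case 1
      then have "g j = (\<lambda>_. coeff P J)" using assms by (auto simp: g_def gauss_coeff_def)
      with 1 show ?thesis by simp
    next
      case 2
      then have "g j = (\<lambda>_. 0)"
        using gauss_coeff_diff_parity[of j "J + 2*_"] by (fastforce simp: g_def)
      with 2 show ?thesis using assms by auto
    next
      case (3 k)
      have "g j = (\<lambda>m. coeff P j * a ^ k * (fact m / fact (m + k)))"
      proof
        fix m
        have "J + 2*m - j = 2 * (m + k)" using 3 by simp
        then show "g j m = coeff P j * a ^ k * (fact m / fact (m + k))"
          using 3 assms by (simp add: g_def gauss_coeff_def power_add field_simps)
      qed
      moreover have "(\<lambda>m. coeff P j * a ^ k * (fact m / fact (m + k) :: real)) \<longlonglongrightarrow> 0"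
        using tendsto_mult_left[OF fact_div_fact_add_tendsto_0[OF 3(1)]] by simp
      ultimately show ?thesis using 3 by simp
    qed
  qed
  then have "(\<lambda>m. \<Sum>j\<le>degree P. g j m) \<longlonglongrightarrow> (\<Sum>j\<le>degree P. if j = J then coeff P J else 0)"
    by (intro tendsto_sum)
  moreover have "J \<le> degree P" using assms(2) le_degree by blast
  ultimately show ?thesis
    by (simp add: g_def gauss_poly_coeff_def sum_distrib_right sum_divide_distrib)
qed

lemma gauss_poly_coeff_eq_0_if_no_coeff_of_parity:
  assumes "\<And>j. coeff P j \<noteq> 0 \<Longrightarrow> j mod 2 \<noteq> n mod 2"
  shows "gauss_poly_coeff a P n = 0"
  unfolding gauss_poly_coeff_def
proof (intro sum.neutral ballI)
  fix j
  show "coeff P j * (if j \<le> n then gauss_coeff a (n - j) else 0) = 0"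
    using assms[of j] gauss_coeff_diff_parity[of j n a] by (cases "coeff P j = 0") auto
qed

lemma ln_fact_le: "ln (fact m :: real) \<le> real m * ln (real m)"
proof (cases "m = 0")
  case False
  then have "ln (fact m :: real) \<le> ln (real m ^ m)"
    using fact_le_power[of m] by (subst ln_le_cancel_iff) auto
  with False show ?thesis by (simp add: ln_realpow)
qed simp

lemma ln_fact_ge: "real m * ln (real m) - real m \<le> ln (fact m :: real)"
proof (cases "m = 0")
  case False
  have "real m ^ m / fact m \<le> exp (real m)"
    using sum_le_suminf[OF summable_exp, of "{m}" "real m"] by (simp add: exp_def inverse_eq_divide)
  then have "ln (real m ^ m) \<le> ln (exp (real m) * fact m)"
    using False by (subst ln_le_cancel_iff) (auto simp: field_simps)
  with False show ?thesis by (simp add: ln_realpow ln_mult)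
qed simp

lemma ln_fact_scaled_bounds:
  fixes m J :: nat
  assumes "1 \<le> m"
  defines "n \<equiv> real (J + 2 * m)"
  shows "0 \<le> ln n - 2 / n * ln (fact m)"
    and "ln n - 2 / n * ln (fact m) \<le> ln (real J + 2) + real J + 1"
proof -
  define t where "t = 2 * real m / n"
  have n: "n = real J + 2 * real m" by (simp add: n_def)
  have t: "0 < t" "t \<le> 1" using assms by (auto simp: t_def n)
  have lnm: "0 \<le> ln (real m)" "ln (real m) \<le> ln n" using assms by (auto simp: n)
  have scale: "2 / n * (real m * x) = t * x" for x by (simp add: t_def)
  have "2 / n * ln (fact m) \<le> 2 / n * (real m * ln (real m))"
    by (rule mult_left_mono[OF ln_fact_le]) (simp add: n)
  also have "\<dots> = t * ln (real m)" by (rule scale)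
  also have "\<dots> \<le> ln (real m)" using t lnm by (simp add: mult_left_le_one_le)
  finally show "0 \<le> ln n - 2 / n * ln (fact m)" using lnm by simp
  have "t * ln (real m) - 1 \<le> t * ln (real m) - t" using t by simp
  also have "\<dots> = 2 / n * (real m * ln (real m) - real m)"
    by (simp add: t_def algebra_simps)
  also have "\<dots> \<le> 2 / n * ln (fact m)"
    by (rule mult_left_mono[OF ln_fact_ge]) (simp add: n)
  finally have "t * ln (real m) - 1 \<le> 2 / n * ln (fact m)" .
  moreover have "ln n - ln (real m) \<le> ln (real J + 2)"
  proof -
    have "n \<le> (real J + 2) * real m"
      using assms mult_left_mono[of 1 "real m" "real J"] by (simp add: n algebra_simps)
    then have "ln n \<le> ln ((real J + 2) * real m)" using assms by (simp add: n)
    then show ?thesis using assms by (simp add: ln_mult)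
  qed
  moreover have "(1 - t) * ln (real m) \<le> real J"
  proof -
    have "(1 - t) * ln (real m) = real J / n * ln (real m)"
      using assms by (simp add: t_def n field_simps)
    also have "\<dots> \<le> real J / n * n"
      using assms ln_le_minus_one[of "real m"] by (intro mult_left_mono) (auto simp: n)
    also have "\<dots> = real J" using assms by (simp add: n)
    finally show ?thesis .
  qed
  ultimately show "ln n - 2 / n * ln (fact m) \<le> ln (real J + 2) + real J + 1"
    by (simp add: algebra_simps)
qed

lemma factorial_growth_bounds:
  fixes \<alpha> \<beta> \<gamma> :: real and J :: nat
  assumes "0 < \<alpha>" and "0 < \<beta>"
  obtains L U where "0 < L"
    and "\<And>(m::nat) y. 1 \<le> m \<Longrightarrow> \<beta> \<le> y \<Longrightarrow> y \<le> \<gamma> \<Longrightarrow>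
           L \<le> real (J + 2*m) * (\<alpha>^m / fact m * y) powr (2 / real (J + 2*m))
         \<and> real (J + 2*m) * (\<alpha>^m / fact m * y) powr (2 / real (J + 2*m)) \<le> U"
proof
  define L where "L = exp (- \<bar>ln \<alpha>\<bar> - \<bar>ln \<beta>\<bar>)"
  define U where "U = exp (ln (real J + 2) + real J + 1 + \<bar>ln \<alpha>\<bar> + \<bar>ln \<gamma>\<bar>)"
  show "0 < L" by (simp add: L_def)
  fix m :: nat and y :: real
  assume m: "1 \<le> m" and y: "\<beta> \<le> y" "y \<le> \<gamma>"
  define n where "n = real (J + 2*m)"
  define s where "s = 2 / n"
  have n: "n = real J + 2 * real m" by (simp add: n_def)
  have s: "0 < s" "s \<le> 1" "s * real m \<le> 1" using m by (auto simp: s_def n field_simps)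
  have shrink: "\<bar>r * x\<bar> \<le> \<bar>x\<bar>" if "0 \<le> r" "r \<le> 1" for r x :: real
    using that by (simp add: abs_mult mult_left_le_one_le)
  have "\<bar>s * real m * ln \<alpha>\<bar> \<le> \<bar>ln \<alpha>\<bar>"
    using s by (intro shrink) auto
  moreover have "- \<bar>ln \<beta>\<bar> \<le> s * ln y"
  proof -
    have "- \<bar>ln \<beta>\<bar> \<le> s * ln \<beta>" using shrink[of s "ln \<beta>"] s by arith
    also have "\<dots> \<le> s * ln y" using s y assms by (intro mult_left_mono) auto
    finally show ?thesis .
  qed
  moreover have "s * ln y \<le> \<bar>ln \<gamma>\<bar>"
  proof -
    have "s * ln y \<le> s * ln \<gamma>" using s y assms by (intro mult_left_mono) auto
    also have "\<dots> \<le> \<bar>ln \<gamma>\<bar>" using shrink[of s "ln \<gamma>"] s by arith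
    finally show ?thesis .
  qed
  moreover have "n * (\<alpha>^m / fact m * y) powr s
      = exp (ln n - s * ln (fact m) + s * real m * ln \<alpha> + s * ln y)"
    using m y assms
    by (simp add: powr_def exp_add exp_diff ln_mult ln_div ln_realpow n algebra_simps)
  ultimately show "L \<le> real (J + 2*m) * (\<alpha>^m / fact m * y) powr (2 / real (J + 2*m))
      \<and> real (J + 2*m) * (\<alpha>^m / fact m * y) powr (2 / real (J + 2*m)) \<le> U"
    using ln_fact_scaled_bounds[OF m, of J]
    unfolding L_def U_def n_def[symmetric] s_def[symmetric] by auto
qed

definition coeff_growth :: "(nat \<Rightarrow> real) \<Rightarrow> nat \<Rightarrow> real" where
  "coeff_growth c n = real n * \<bar>c n\<bar> powr (2 / real n)"

lemma eventually_sign_alternates: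
  fixes a p :: real and c T :: "nat \<Rightarrow> real"
  assumes "a < 0" and "p \<noteq> 0" and "T \<longlonglongrightarrow> p"
    and c: "\<And>m. c (J + 2*m) = a ^ m / fact m * T m"
  shows "\<forall>\<^sub>F m in sequentially. c (J + 2*m) * c (J + 2*(m + 1)) \<le> 0"
proof -
  have "(\<lambda>m. T m * T (Suc m)) \<longlonglongrightarrow> p * p"
    using assms(3) by (intro tendsto_mult LIMSEQ_Suc)
  moreover have "0 < p * p" using assms(2) not_real_square_gt_zero by blast
  ultimately have "\<forall>\<^sub>F m in sequentially. 0 < T m * T (Suc m)"
    by (rule order_tendstoD)
  then show ?thesis
  proof (rule eventually_mono)
    fix m assume T: "0 < T m * T (Suc m)"
    have product: "c (J + 2*m) * c (J + 2*(m + 1))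
        = a * (a ^ m)\<^sup>2 / (fact m * fact (m + 1)) * (T m * T (Suc m))"
      unfolding c[of m] c[of "m + 1"] by (simp add: power2_eq_square field_simps)
    have "a * (a ^ m)\<^sup>2 / (fact m * fact (m + 1)) \<le> 0"
      using assms(1) by (intro divide_nonpos_pos mult_nonpos_nonneg) auto
    then show "c (J + 2*m) * c (J + 2*(m + 1)) \<le> 0"
      unfolding product using T by (intro mult_nonpos_nonneg) auto
  qed
qed

lemma eventually_coeff_growth_bounded:
  fixes a p :: real and c T :: "nat \<Rightarrow> real"
  assumes "a \<noteq> 0" and "p \<noteq> 0" and "T \<longlonglongrightarrow> p"
    and c: "\<And>m. c (J + 2*m) = a ^ m / fact m * T m"
  obtains L U where "0 < L"
    and "\<forall>\<^sub>F m in sequentially. L \<le> coeff_growth c (J + 2*m) \<and> coeff_growth c (J + 2*m) \<le> U"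
proof -
  obtain L U where "0 < L" and bounds: "\<And>m y. 1 \<le> m \<Longrightarrow> \<bar>p\<bar> / 2 \<le> y \<Longrightarrow> y \<le> 2 * \<bar>p\<bar> \<Longrightarrow>
      L \<le> real (J + 2*m) * (\<bar>a\<bar> ^ m / fact m * y) powr (2 / real (J + 2*m))
    \<and> real (J + 2*m) * (\<bar>a\<bar> ^ m / fact m * y) powr (2 / real (J + 2*m)) \<le> U"
    by (rule factorial_growth_bounds[of "\<bar>a\<bar>" "\<bar>p\<bar> / 2" "2 * \<bar>p\<bar>" J]) (use assms in auto)
  have growth: "coeff_growth c (J + 2*m)
      = real (J + 2*m) * (\<bar>a\<bar> ^ m / fact m * \<bar>T m\<bar>) powr (2 / real (J + 2*m))" for m
    by (simp add: coeff_growth_def c abs_mult power_abs)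
  have lim: "(\<lambda>m. \<bar>T m\<bar>) \<longlonglongrightarrow> \<bar>p\<bar>" using assms(3) by (rule tendsto_rabs)
  have "\<bar>p\<bar> / 2 < \<bar>p\<bar>" "\<bar>p\<bar> < 2 * \<bar>p\<bar>" using assms(2) by auto
  then have "\<forall>\<^sub>F m in sequentially. \<bar>p\<bar> / 2 < \<bar>T m\<bar>"
      "\<forall>\<^sub>F m in sequentially. \<bar>T m\<bar> < 2 * \<bar>p\<bar>"
    by (simp_all only: order_tendstoD[OF lim])
  moreover have "\<forall>\<^sub>F m in sequentially. 1 \<le> m" by simp
  ultimately have "\<forall>\<^sub>F m in sequentially. L \<le> coeff_growth c (J + 2*m) \<and> coeff_growth c (J + 2*m) \<le> U"
    by eventually_elim (unfold growth, rule bounds, auto)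
  with \<open>0 < L\<close> show thesis by (rule that)
qed

lemma eventually_parity_class:
  assumes "\<forall>\<^sub>F m in sequentially. Q (J + 2*m)"
  shows "\<forall>\<^sub>F n in sequentially. n mod 2 = J mod 2 \<longrightarrow> Q n"
proof -
  obtain M where M: "\<And>m. M \<le> m \<Longrightarrow> Q (J + 2*m)"
    using assms by (auto simp: eventually_sequentially)
  have "Q n" if "J + 2*M \<le> n" and "n mod 2 = J mod 2" for n
  proof -
    define k where "k = (n - J) div 2"
    have "2 dvd n - J" using that by (simp add: mod_eq_dvd_iff_nat)
    then have "n = J + 2 * k" using that by (simp add: k_def)
    moreover have "M \<le> k" using that calculation by linarith
    ultimately show ?thesis using M by simp
  qed
  then show ?thesis unfolding eventually_sequentially by blast
qed

lemma gauss_poly_coeff_parity_class: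
  assumes "a < 0" and "coeff P j \<noteq> 0"
  defines "c \<equiv> gauss_poly_coeff a P"
  obtains L U where "0 < L"
    and "\<forall>\<^sub>F n in sequentially. n mod 2 = j mod 2 \<longrightarrow>
           c n * c (n + 2) \<le> 0 \<and> L \<le> coeff_growth c n \<and> coeff_growth c n \<le> U"
proof -
  obtain J where J: "J mod 2 = j mod 2" "coeff P J \<noteq> 0"
    and top: "\<And>i. coeff P i \<noteq> 0 \<Longrightarrow> i mod 2 = J mod 2 \<Longrightarrow> i \<le> J"
    using top_coeff_of_parity[OF assms(2)] by blast
  define T where "T m = c (J + 2*m) * fact m / a ^ m" for m
  have T: "T \<longlonglongrightarrow> coeff P J"
    unfolding T_def c_def using assms(1) J(2) top by (intro gauss_poly_coeff_parity_class_tendsto) auto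
  have c: "c (J + 2*m) = a ^ m / fact m * T m" for m
    using assms(1) by (simp add: T_def)
  obtain L U where "0 < L" and growth:
      "\<forall>\<^sub>F m in sequentially. L \<le> coeff_growth c (J + 2*m) \<and> coeff_growth c (J + 2*m) \<le> U"
    using eventually_coeff_growth_bounded[of a "coeff P J" T c J] assms(1) J(2) T c by auto
  have sign: "\<forall>\<^sub>F m in sequentially. c (J + 2*m) * c (J + 2*(m + 1)) \<le> 0"
    using assms(1) J(2) T c by (rule eventually_sign_alternates)
  have "\<forall>\<^sub>F m in sequentially. c (J + 2*m) * c (J + 2*m + 2) \<le> 0
      \<and> L \<le> coeff_growth c (J + 2*m) \<and> coeff_growth c (J + 2*m) \<le> U"
    using growth sign by eventually_elim (simp add: algebra_simps)
  from eventually_parity_class[OF this] \<open>0 < L\<close> show thesis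
    using J(1) by (intro that) auto
qed

lemma gauss_poly_coeff_eventually_bounded:
  fixes P :: "real poly"
  assumes "a < 0"
  defines "c \<equiv> gauss_poly_coeff a P"
  obtains U where "\<forall>\<^sub>F n in sequentially. c n * c (n + 2) \<le> 0 \<and> coeff_growth c n \<le> U"
proof -
  have parity_bound:
    "\<exists>U. \<forall>\<^sub>F n in sequentially. n mod 2 = q \<longrightarrow> c n * c (n + 2) \<le> 0 \<and> coeff_growth c n \<le> U"
    for q
  proof (cases "\<exists>j. coeff P j \<noteq> 0 \<and> j mod 2 = q")
    case True
    then obtain j where j: "coeff P j \<noteq> 0" "j mod 2 = q" by blast
    obtain L U where "\<forall>\<^sub>F n in sequentially. n mod 2 = j mod 2 \<longrightarrow>
        c n * c (n + 2) \<le> 0 \<and> L \<le> coeff_growth c n \<and> coeff_growth c n \<le> U"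
      using gauss_poly_coeff_parity_class[OF assms(1) j(1)] unfolding c_def by blast
    then show ?thesis using j(2) by (auto elim: eventually_mono)
  next
    case False
    then have "c n = 0" if "n mod 2 = q" for n
      unfolding c_def using that by (intro gauss_poly_coeff_eq_0_if_no_coeff_of_parity) auto
    then have "n mod 2 = q \<longrightarrow> c n * c (n + 2) \<le> 0 \<and> coeff_growth c n \<le> 0" for n
      by (simp add: coeff_growth_def)
    then show ?thesis by (auto intro: always_eventually)
  qed
  obtain U0 where "\<forall>\<^sub>F n in sequentially. n mod 2 = 0 \<longrightarrow> c n * c (n + 2) \<le> 0 \<and> coeff_growth c n \<le> U0"
    using parity_bound[of 0] by blast
  moreover obtain U1 where "\<forall>\<^sub>F n in sequentially. n mod 2 = 1 \<longrightarrow> c n * c (n + 2) \<le> 0 \<and> coeff_growth c n \<le> U1"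
    using parity_bound[of 1] by blast
  ultimately have "\<forall>\<^sub>F n in sequentially. c n * c (n + 2) \<le> 0 \<and> coeff_growth c n \<le> max U0 U1"
  proof eventually_elim
    case (elim n)
    have "n mod 2 = 0 \<or> n mod 2 = 1" by presburger
    with elim show ?case by (auto simp: le_max_iff_disj)
  qed
  then show thesis by (rule that)
qed

lemma gauss_poly_coeff_frequently_large:
  assumes "a < 0" and "P \<noteq> 0"
  obtains L where "0 < L" and "\<exists>\<^sub>F n in sequentially. L \<le> coeff_growth (gauss_poly_coeff a P) n"
proof -
  obtain j where j: "coeff P j \<noteq> 0" using assms(2) leading_coeff_neq_0 by blast
  obtain L U where "0 < L" and ev: "\<forall>\<^sub>F n in sequentially. n mod 2 = j mod 2 \<longrightarrow>
      gauss_poly_coeff a P n * gauss_poly_coeff a P (n + 2) \<le> 0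
      \<and> L \<le> coeff_growth (gauss_poly_coeff a P) n \<and> coeff_growth (gauss_poly_coeff a P) n \<le> U"
    using gauss_poly_coeff_parity_class[OF assms(1) j] by blast
  have "\<exists>n\<ge>N. n mod 2 = j mod 2" for N
    by (rule exI[of _ "2 * N + j"]) auto
  then have "\<exists>\<^sub>F n in sequentially. n mod 2 = j mod 2"
    by (simp add: frequently_sequentially)
  then have "\<exists>\<^sub>F n in sequentially. L \<le> coeff_growth (gauss_poly_coeff a P) n"
    by (rule frequently_rev_mp) (use ev in \<open>auto elim: eventually_mono\<close>)
  with \<open>0 < L\<close> show thesis by (rule that)
qed

lemma le_Limsup_if_frequently:
  fixes f :: "'a \<Rightarrow> 'b :: complete_linorder"
  assumes "\<exists>\<^sub>F x in F. l \<le> f x"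
  shows "l \<le> Limsup F f"
proof (rule ccontr)
  assume "\<not> l \<le> Limsup F f"
  then have "\<forall>\<^sub>F x in F. f x < l" by (intro Limsup_lessD) simp
  then have "\<forall>\<^sub>F x in F. \<not> l \<le> f x" by (rule eventually_mono) simp
  with assms show False by (simp add: frequently_def)
qed

lemma hyperbolic_poly_nonzero:
  assumes "hyperbolic_poly P"
  shows "P \<noteq> 0"
proof
  assume "P = 0"
  then have "\<i> \<in> \<real>" using assms by (simp add: hyperbolic_poly_def)
  then show False by (simp add: complex_is_Real_iff)
qed

theorem theorem2:
  fixes a :: real and P :: "real poly" and c :: "nat \<Rightarrow> real"
  assumes "a < 0"
    and "hyperbolic_poly P"
    and "\<And>z::complex. (\<lambda>n. complex_of_real (c n) * z ^ n) sums
           (exp (complex_of_real a * z\<^sup>2) * poly (map_poly complex_of_real P) z)"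
  shows "0 < limsup (\<lambda>n. ereal (real n * \<bar>c n\<bar> powr (2 / real n)))
       \<and> limsup (\<lambda>n. ereal (real n * \<bar>c n\<bar> powr (2 / real n))) < \<infinity>
       \<and> (\<exists>n0::nat. \<forall>n>n0. c (n - 1) * c (n + 1) \<le> 0)"
proof -
  have c: "c = gauss_poly_coeff a P" using assms(3) by (rule eq_gauss_poly_coeff)
  obtain U where ev: "\<forall>\<^sub>F n in sequentially. c n * c (n + 2) \<le> 0 \<and> coeff_growth c n \<le> U"
    using gauss_poly_coeff_eventually_bounded[OF assms(1)] c by blast
  obtain L where "0 < L" and freq: "\<exists>\<^sub>F n in sequentially. L \<le> coeff_growth c n"
    using gauss_poly_coeff_frequently_large[OF assms(1) hyperbolic_poly_nonzero[OF assms(2)]] c by blast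
  have upper: "limsup (\<lambda>n. ereal (coeff_growth c n)) \<le> ereal U"
    using ev by (intro Limsup_bounded) (auto elim: eventually_mono)
  have lower: "ereal L \<le> limsup (\<lambda>n. ereal (coeff_growth c n))"
    using freq by (intro le_Limsup_if_frequently) (auto elim: frequently_elim1)
  obtain N where N: "\<And>n. N \<le> n \<Longrightarrow> c n * c (n + 2) \<le> 0"
    using ev by (auto simp: eventually_sequentially)
  have "c (n - 1) * c (n + 1) \<le> 0" if "N + 1 < n" for n
  proof -
    have "N \<le> n - 1" and "n - 1 + 2 = n + 1" using that by auto
    then show ?thesis using N[of "n - 1"] by simp
  qed
  moreover have "0 < limsup (\<lambda>n. ereal (coeff_growth c n))"
    using \<open>0 < L\<close> by (intro less_le_trans[OF _ lower]) simp
  moreover have "limsup (\<lambda>n. ereal (coeff_growth c n)) < \<infinity>"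
    by (rule le_less_trans[OF upper]) simp
  ultimately show ?thesis unfolding coeff_growth_def by blast
qed

end
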